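(* Let $u\in\mathcal{F}_\mathrm{e}$ and let $u=u_1+u_2$ with $u_1\in\mathcal{F}^{(s)}_\mathrm{e}$ and $u_2\in\mathcal{G}^{(s)}$. Then $u'=u_2'$ a.e. on $F$.
   Context: Let $m$ be Lebesgue measure. $(\mathcal{E},\mathcal{F})=(\frac12\mathbf{D},H^1(\mathbf{R}))$, $\mathcal{E}(u,v)=\frac12\int u'v'dx$, with extended space $\mathcal{F}_\mathrm{e}=\{u\text{ absolutely continuous},\ u'\in L^2(\mathbf{R})\}$. Let $s$ be strictly increasing, absolutely continuous, with $s'\in\{0,1\}$ a.e. Let $(\mathcal{E}^{(s)},\mathcal{F}^{(s)})$ be given by $\mathcal{F}^{(s)}=\{u\in L^2:u\ll s,\int(du/ds)^2ds<\infty\}$ and $\mathcal{E}^{(s)}(u,v)=\frac12\int\frac{du}{ds}\frac{dv}{ds}ds$, with extended space $\mathcal{F}^{(s)}_\mathrm{e}=\{u\ll s:\int(du/ds)^2ds<\infty,\ u(\infty)=0\text{ if }s(\infty)<\infty,\ u(-\infty)=0\text{ if }s(-\infty)>-\infty\}$. Let $G=\{s'=1\}$, $F=\mathbf{R}\setminus G$, and assume $G$ is open, $m(F)>0$ and $F$ has no isolated points. Define $\mathcal{G}^{(s)}=\{u\in\mathcal{F}_\mathrm{e}:\mathcal{E}(u,v)=0\ \forall v\in\mathcal{F}^{(s)}_\mathrm{e}\}$. *)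

theory Defs
  imports "HOL-Analysis.Analysis"
begin

definition abs_cont_on :: "real \<Rightarrow> real \<Rightarrow> (real \<Rightarrow> real) \<Rightarrow> bool" where
  "abs_cont_on a b u \<longleftrightarrow>
     (\<forall>e>0. \<exists>d>0. \<forall>I :: (real \<times> real) set.
        finite I \<longrightarrow> (\<forall>(x, y)\<in>I. a \<le> x \<and> x \<le> y \<and> y \<le> b) \<longrightarrow>
        disjoint_family_on (\<lambda>(x, y). {x<..<y}) I \<longrightarrow>
        (\<Sum>(x, y)\<in>I. y - x) < d \<longrightarrow> (\<Sum>(x, y)\<in>I. \<bar>u y - u x\<bar>) < e)"

definition abs_cont :: "(real \<Rightarrow> real) \<Rightarrow> bool" where
  "abs_cont u \<longleftrightarrow> (\<forall>a b. a \<le> b \<longrightarrow> abs_cont_on a b u)"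

definition Fe :: "(real \<Rightarrow> real) set" where
  "Fe = {u. abs_cont u \<and> deriv u \<in> borel_measurable lebesgue
              \<and> integrable lebesgue (\<lambda>x. (deriv u x)\<^sup>2)}"

definition E_form :: "(real \<Rightarrow> real) \<Rightarrow> (real \<Rightarrow> real) \<Rightarrow> real" where
  "E_form u v = (1/2) * (\<integral>x. deriv u x * deriv v x \<partial>lebesgue)"

text \<open>u << s with Radon-Nikodym density f = du/ds w.r.t. the Lebesgue-Stieltjes measure ds:
  u(b) - u(a) = \<integral>_(a,b] f ds for all a \<le> b.\<close>
definition ds_density :: "(real \<Rightarrow> real) \<Rightarrow> (real \<Rightarrow> real) \<Rightarrow> (real \<Rightarrow> real) \<Rightarrow> bool" where
  "ds_density s u f \<longleftrightarrow> f \<in> borel_measurable borel \<and>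
     (\<forall>a b. a \<le> b \<longrightarrow> set_integrable (interval_measure s) {a<..b} f \<and>
        u b - u a = (LINT x:{a<..b}|interval_measure s. f x))"

definition Fse :: "(real \<Rightarrow> real) \<Rightarrow> (real \<Rightarrow> real) set" where
  "Fse s = {u. (\<exists>f. ds_density s u f \<and>
                    (\<integral>\<^sup>+x. ennreal ((f x)\<^sup>2) \<partial>interval_measure s) < \<infinity>)
              \<and> (bdd_above (range s) \<longrightarrow> (u \<longlongrightarrow> 0) at_top)
              \<and> (bdd_below (range s) \<longrightarrow> (u \<longlongrightarrow> 0) at_bot)}"

definition Gs :: "(real \<Rightarrow> real) \<Rightarrow> (real \<Rightarrow> real) set" where
  "Gs s = {u \<in> Fe. \<forall>v\<in>Fse s. E_form u v = 0}"

end

theory Submission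
  imports Defs
begin

text \<open>It suffices that \<open>u\<^sub>1' = 0\<close> almost everywhere on \<open>F\<close>. As \<open>s\<close> is absolutely continuous with
  \<open>s' = indicator G\<close> almost everywhere, the change of variables formula together with Luzin's
  property (N) shows that the Lebesgue--Stieltjes measure \<open>ds\<close> is Lebesgue measure restricted to \<open>G\<close>.
  Hence the locally finite measure \<open>|du\<^sub>1/ds| ds\<close>, which dominates the increments of \<open>u\<^sub>1\<close>, does
  not charge \<open>F\<close>, and by the Vitali covering theorem its density with respect to Lebesgue measure,
  and with it the derivative of \<open>u\<^sub>1\<close>, vanishes almost everywhere on \<open>F\<close>.\<close>

lemma abs_cont_imp_isCont:
  assumes "abs_cont s"
  shows "isCont s x"
proof -
  have ac: "abs_cont_on (x - 1) (x + 1) s"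
    using assms unfolding abs_cont_def by simp
  show ?thesis
    unfolding isCont_iff
  proof (rule LIM_I)
    fix r :: real
    assume "r > 0"
    then obtain d where d: "d > 0"
      and H: "\<And>I::(real \<times> real) set. finite I \<Longrightarrow> (\<forall>(p, q)\<in>I. x - 1 \<le> p \<and> p \<le> q \<and> q \<le> x + 1) \<Longrightarrow>
        disjoint_family_on (\<lambda>(p, q). {p<..<q}) I \<Longrightarrow>
        (\<Sum>(p, q)\<in>I. q - p) < d \<Longrightarrow> (\<Sum>(p, q)\<in>I. \<bar>s q - s p\<bar>) < r"
      using ac unfolding abs_cont_on_def by blast
    show "\<exists>e>0. \<forall>y. y \<noteq> 0 \<and> norm (y - 0) < e \<longrightarrow> norm (s (x + y) - s x) < r"
    proof (intro exI[of _ "min d 1"] conjI allI impI)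
      fix y :: real
      assume y: "y \<noteq> 0 \<and> norm (y - 0) < min d 1"
      show "norm (s (x + y) - s x) < r"
      proof (cases "y > 0")
        case True
        have "(\<Sum>(p, q)\<in>{(x, x + y)}. \<bar>s q - s p\<bar>) < r"
          by (rule H) (use y True in \<open>auto simp: disjoint_family_on_def\<close>)
        then show ?thesis by simp
      next
        case False
        have "(\<Sum>(p, q)\<in>{(x + y, x)}. \<bar>s q - s p\<bar>) < r"
          by (rule H) (use y False in \<open>auto simp: disjoint_family_on_def\<close>)
        then show ?thesis by (simp add: abs_minus_commute)
      qed
    qed (use d in simp)
  qed
qed

lemma emeasure_UN_countable_le:
  fixes A :: "'i \<Rightarrow> 'a set"
  assumes C: "countable C" and meas: "\<And>c. c \<in> C \<Longrightarrow> A c \<in> sets M"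
    and fin: "\<And>D. finite D \<Longrightarrow> D \<subseteq> C \<Longrightarrow> emeasure M (\<Union>c\<in>D. A c) \<le> e"
  shows "emeasure M (\<Union>c\<in>C. A c) \<le> e"
proof (cases "C = {}")
  case True
  then show ?thesis using fin[of "{}"] by simp
next
  case False
  define g where "g = from_nat_into C"
  have rg: "range g = C" using C False by (simp add: g_def range_from_nat_into)
  define B where "B n = (\<Union>c\<in>g ` {..<n}. A c)" for n
  have B_sets: "range B \<subseteq> sets M"
    using meas rg by (auto simp: B_def intro!: sets.finite_UN)
  have B_inc: "incseq B"
    by (force simp: incseq_def B_def)
  have "(SUP n. emeasure M (B n)) \<le> e"
    unfolding B_def by (intro SUP_least fin) (use rg in auto)
  moreover have "(\<Union>n. B n) = (\<Union>c\<in>C. A c)"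
    unfolding B_def rg[symmetric] by auto
  ultimately show ?thesis using SUP_emeasure_incseq[OF B_sets B_inc] by simp
qed

lemma countable_components_open:
  fixes V :: "'a::euclidean_space set"
  assumes "open V"
  shows "countable (components V)"
proof (rule countable_disjoint_open_subsets)
  show "open c" if "c \<in> components V" for c
    using assms that by (rule open_components)
  show "pairwise disjnt (components V)"
    using pairwise_disjoint_components unfolding pairwise_def disjnt_def by blast
qed

lemma open_component_Inf_Sup:
  fixes V :: "real set"
  assumes c: "c \<in> components V" and Vab: "V \<subseteq> {a<..<b}" and oV: "open V"
  shows "{Inf c<..<Sup c} \<subseteq> c" "c \<subseteq> {Inf c..Sup c}" "Inf c < Sup c" "a \<le> Inf c" "Sup c \<le> b"
proof -
  have ne: "c \<noteq> {}" using c in_components_nonempty by blast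
  have sub: "c \<subseteq> {a<..<b}" using c in_components_subset Vab by blast
  have bb: "bdd_below c" "bdd_above c"
    using sub by (meson bdd_below_Ioo bdd_below_mono, meson bdd_above_Ioo bdd_above_mono)
  have iv: "is_interval c"
    using c in_components_connected is_interval_connected_1 by blast
  have oc: "open c" using c oV open_components by blast
  show "{Inf c<..<Sup c} \<subseteq> c"
  proof
    fix y assume y: "y \<in> {Inf c<..<Sup c}"
    obtain p where "p \<in> c" "p < y" using y ne bb by (meson cInf_less_iff greaterThanLessThan_iff)
    moreover obtain q where "q \<in> c" "y < q" using y ne bb by (meson less_cSup_iff greaterThanLessThan_iff)
    ultimately show "y \<in> c" using iv unfolding is_interval_1 by (meson less_imp_le)
  qed
  show "c \<subseteq> {Inf c..Sup c}" using bb by (auto intro: cInf_lower cSup_upper)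
  obtain x where x: "x \<in> c" using ne by blast
  then obtain r where r: "r > 0" "ball x r \<subseteq> c" using oc open_contains_ball by blast
  have "x + r/2 \<in> c" using r by (auto simp: dist_real_def intro!: subsetD[OF r(2)])
  then have "x + r/2 \<le> Sup c" using bb by (simp add: cSup_upper)
  moreover have "Inf c \<le> x" using x bb by (simp add: cInf_lower)
  ultimately show "Inf c < Sup c" using r by linarith
  show "a \<le> Inf c" using ne sub by (force intro: cInf_greatest)
  show "Sup c \<le> b" using ne sub by (force intro: cSup_least)
qed

lemma open_components_Ioo_disjoint:
  fixes V :: "real set"
  assumes "c \<in> components V" "c' \<in> components V" "c \<noteq> c'" "V \<subseteq> {a<..<b}" "open V"
  shows "{Inf c<..<Sup c} \<inter> {Inf c'<..<Sup c'} = {}"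
proof -
  have "c \<inter> c' = {}"
    using pairwise_disjoint_components[of V] assms(1-3) unfolding pairwise_def by blast
  then show ?thesis
    using open_component_Inf_Sup(1)[OF assms(1,4,5)] open_component_Inf_Sup(1)[OF assms(2,4,5)] by blast
qed

lemma sum_open_components_length_le:
  fixes V :: "real set"
  assumes D: "finite D" "D \<subseteq> components V" and Vab: "V \<subseteq> {a<..<b}" and oV: "open V"
  shows "(\<Sum>c\<in>D. Sup c - Inf c) \<le> measure lebesgue V"
proof -
  note comp = open_component_Inf_Sup[OF _ Vab oV]
  have "(\<Sum>c\<in>D. Sup c - Inf c) = (\<Sum>c\<in>D. measure lebesgue {Inf c<..<Sup c})"
    using comp(3) D by (intro sum.cong refl) (auto simp: less_imp_le)
  also have "\<dots> = measure lebesgue (\<Union>c\<in>D. {Inf c<..<Sup c})"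
  proof (rule measure_finite_Union[symmetric])
    show "disjoint_family_on (\<lambda>c. {Inf c<..<Sup c}) D"
      using open_components_Ioo_disjoint[OF _ _ _ Vab oV] D by (auto simp: disjoint_family_on_def)
    show "emeasure lebesgue {Inf c<..<Sup c} \<noteq> \<infinity>" for c :: "real set"
      using lmeasurable_interval(2)[of "Inf c" "Sup c"] by (simp add: fmeasurable_def)
  qed (use D in auto)
  also have "\<dots> \<le> measure lebesgue V"
  proof (rule measure_mono_fmeasurable)
    show "(\<Union>c\<in>D. {Inf c<..<Sup c}) \<subseteq> V"
      using comp(1) D in_components_subset by blast
    show "V \<in> lmeasurable"
      using oV Vab by (metis bounded_box bounded_subset box_real(1) lmeasurable_open)
  qed (use D in auto)
  finally show ?thesis .
qed

lemma emeasure_UN_image_components_le: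
  fixes s :: "real \<Rightarrow> real"
  assumes mono: "mono s"
    and H: "\<And>I::(real \<times> real) set. finite I \<Longrightarrow> (\<forall>(x, y)\<in>I. a \<le> x \<and> x \<le> y \<and> y \<le> b) \<Longrightarrow>
        disjoint_family_on (\<lambda>(x, y). {x<..<y}) I \<Longrightarrow>
        (\<Sum>(x, y)\<in>I. y - x) < d \<Longrightarrow> (\<Sum>(x, y)\<in>I. \<bar>s y - s x\<bar>) < e"
    and oV: "open V" and Vab: "V \<subseteq> {a<..<b}" and mV: "measure lebesgue V < d"
  shows "emeasure lborel (\<Union>c\<in>components V. {s (Inf c)..s (Sup c)}) \<le> ennreal e"
proof (rule emeasure_UN_countable_le)
  show "countable (components V)" using oV by (rule countable_components_open)
  show "{s (Inf c)..s (Sup c)} \<in> sets lborel" for c by simp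
  fix D assume D: "finite D" "D \<subseteq> components V"
  note comp = open_component_Inf_Sup[OF _ Vab oV]
  have incr: "s (Inf c) \<le> s (Sup c)" if "c \<in> D" for c
    using comp(3) that D mono by (auto simp: mono_def less_imp_le)
  define \<phi> where "\<phi> c = (Inf c, Sup c)" for c :: "real set"
  have inj: "inj_on \<phi> D"
  proof (rule inj_onI, rule ccontr)
    fix c c' assume cc: "c \<in> D" "c' \<in> D" "\<phi> c = \<phi> c'" "c \<noteq> c'"
    have "{Inf c<..<Sup c} \<inter> {Inf c'<..<Sup c'} = {}"
      using cc D by (intro open_components_Ioo_disjoint[OF _ _ _ Vab oV]) auto
    moreover have "Inf c = Inf c'" "Sup c = Sup c'" using cc(3) by (auto simp: \<phi>_def)
    ultimately have "{Inf c<..<Sup c} = {}" by simp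
    then show False using comp(3)[of c] cc D by auto
  qed
  have sum_\<phi>: "(\<Sum>(x, y)\<in>\<phi> ` D. h x y) = (\<Sum>c\<in>D. h (Inf c) (Sup c))" for h :: "real \<Rightarrow> real \<Rightarrow> real"
    by (subst sum.reindex[OF inj]) (simp add: \<phi>_def)
  have "(\<Sum>(x, y)\<in>\<phi> ` D. \<bar>s y - s x\<bar>) < e"
  proof (rule H)
    show "\<forall>(x, y)\<in>\<phi> ` D. a \<le> x \<and> x \<le> y \<and> y \<le> b"
      using comp(3,4,5) D by (auto simp: \<phi>_def less_imp_le)
    show "disjoint_family_on (\<lambda>(x, y). {x<..<y}) (\<phi> ` D)"
      using open_components_Ioo_disjoint[OF _ _ _ Vab oV] D
      by (auto simp: disjoint_family_on_def \<phi>_def)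
    show "(\<Sum>(x, y)\<in>\<phi> ` D. y - x) < d"
      using sum_\<phi>[of "\<lambda>x y. y - x"] sum_open_components_length_le[OF D Vab oV] mV by simp
  qed (use D in simp)
  then have sum_less: "(\<Sum>c\<in>D. s (Sup c) - s (Inf c)) < e"
    using incr by (simp add: sum_\<phi>)
  have "emeasure lborel (\<Union>c\<in>D. {s (Inf c)..s (Sup c)}) \<le> (\<Sum>c\<in>D. emeasure lborel {s (Inf c)..s (Sup c)})"
    by (rule emeasure_subadditive_finite) (use D in auto)
  also have "\<dots> = ennreal (\<Sum>c\<in>D. s (Sup c) - s (Inf c))"
    using incr by (simp add: sum_ennreal)
  also have "\<dots> \<le> ennreal e" using sum_less by (simp add: ennreal_leI)
  finally show "emeasure lborel (\<Union>c\<in>D. {s (Inf c)..s (Sup c)}) \<le> ennreal e" .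
qed

lemma negligible_open_cover_Ioo:
  fixes N :: "real set"
  assumes N: "negligible N" and Nab: "N \<subseteq> {a<..<b}" and d: "d > 0"
  obtains V where "open V" "N \<subseteq> V" "V \<subseteq> {a<..<b}" "measure lebesgue V < d"
proof -
  have N_sets: "N \<in> sets lebesgue" using N negligible_imp_sets by blast
  obtain T where T: "open T" "N \<subseteq> T" "emeasure lebesgue (T - N) < ennreal d"
    using sets_lebesgue_outer_open[OF N_sets d] by blast
  define V where "V = T \<inter> {a<..<b}"
  have "open V" "V \<subseteq> {a<..<b}" using T by (auto simp: V_def)
  then have V_meas: "V \<in> lmeasurable"
    by (metis bounded_box bounded_subset box_real(1) lmeasurable_open)
  have "emeasure lebesgue V \<le> emeasure lebesgue ((T - N) \<union> N)"
    by (rule emeasure_mono) (use T N_sets in \<open>auto simp: V_def\<close>)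
  also have "\<dots> \<le> emeasure lebesgue (T - N) + emeasure lebesgue N"
    by (rule emeasure_subadditive) (use T N_sets in auto)
  also have "\<dots> < ennreal d"
    using T(3) N by (simp add: negligible_iff_null_sets null_setsD1)
  finally have "measure lebesgue V < d"
    using d by (simp add: emeasure_eq_measure2[OF V_meas] ennreal_less_iff)
  then show thesis using T Nab by (intro that[of V]) (auto simp: V_def)
qed

lemma negligible_image_abs_cont_mono_Ioo:
  fixes s :: "real \<Rightarrow> real"
  assumes ac: "abs_cont s" and mono: "mono s" and ab: "a \<le> b"
    and N: "negligible N" and Nab: "N \<subseteq> {a<..<b}"
  shows "negligible (s ` N)"
  unfolding negligible_outer_le
proof (intro allI impI)
  fix e :: real
  assume e: "e > 0"
  obtain d where d: "d > 0"
    and H: "\<And>I::(real \<times> real) set. finite I \<Longrightarrow> (\<forall>(x, y)\<in>I. a \<le> x \<and> x \<le> y \<and> y \<le> b) \<Longrightarrow>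
        disjoint_family_on (\<lambda>(x, y). {x<..<y}) I \<Longrightarrow>
        (\<Sum>(x, y)\<in>I. y - x) < d \<Longrightarrow> (\<Sum>(x, y)\<in>I. \<bar>s y - s x\<bar>) < e"
    using ac ab e unfolding abs_cont_def abs_cont_on_def by meson
  obtain V where oV: "open V" and NV: "N \<subseteq> V" and Vab: "V \<subseteq> {a<..<b}" and mV: "measure lebesgue V < d"
    using negligible_open_cover_Ioo[OF N Nab d] by blast
  define T where "T = (\<Union>c\<in>components V. {s (Inf c)..s (Sup c)})"
  have T_sets: "T \<in> sets borel"
    unfolding T_def using countable_components_open[OF oV] by (intro sets.countable_UN'') auto
  have T_le: "emeasure lborel T \<le> ennreal e"
    unfolding T_def by (rule emeasure_UN_image_components_le[OF mono H oV Vab mV])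
  have T_fin: "T \<in> fmeasurable lborel"
    using T_le T_sets
    by (intro fmeasurableI) (auto simp: top.not_eq_extremum dest: order.strict_trans1[OF _ ennreal_less_top])
  have "s ` N \<subseteq> T"
  proof
    fix y assume "y \<in> s ` N"
    then obtain x where x: "x \<in> N" "y = s x" by blast
    then obtain c where c: "c \<in> components V" "x \<in> c"
      using NV Union_components[of V] by blast
    then have "x \<in> {Inf c..Sup c}" using open_component_Inf_Sup(2)[OF c(1) Vab oV] by blast
    then have "s x \<in> {s (Inf c)..s (Sup c)}" using mono by (auto simp: mono_def)
    then show "y \<in> T" using c x unfolding T_def by blast
  qed
  moreover have "T \<in> lmeasurable" using T_fin T_sets by (auto simp: fmeasurable_def)
  moreover have "measure lebesgue T \<le> e"
    using T_le T_sets T_fin e by (simp add: measure_def enn2real_leI)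
  ultimately show "\<exists>T. s ` N \<subseteq> T \<and> T \<in> lmeasurable \<and> measure lebesgue T \<le> e" by blast
qed

lemma negligible_image_abs_cont_mono:
  fixes s :: "real \<Rightarrow> real"
  assumes ac: "abs_cont s" and mono: "mono s" and N: "negligible N"
  shows "negligible (s ` N)"
proof -
  define W where "W n = N \<inter> {- real n <..< real n}" for n
  have "negligible (s ` W n)" for n
    by (rule negligible_image_abs_cont_mono_Ioo[OF ac mono, of "- real n" "real n"])
       (use N in \<open>auto simp: W_def intro: negligible_subset\<close>)
  moreover have "N = (\<Union>n. W n)"
  proof (auto simp: W_def)
    fix x assume "x \<in> N"
    obtain n where "\<bar>x\<bar> < real n" using reals_Archimedean2 by blast
    then show "\<exists>n. - real n < x \<and> x < real n" by (intro exI[of _ n]) (simp add: abs_less_iff)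
  qed
  ultimately show ?thesis by (auto simp: image_UN intro!: negligible_countable_Union)
qed

lemma strict_mono_continuous_image_Ioc:
  fixes s :: "real \<Rightarrow> real"
  assumes sm: "strict_mono s" and cont: "\<And>x. isCont s x" and ab: "a \<le> b"
  shows "s ` {a<..b} = {s a<..s b}"
proof
  show "s ` {a<..b} \<subseteq> {s a<..s b}"
    using sm by (auto simp: strict_mono_less strict_mono_less_eq)
  show "{s a<..s b} \<subseteq> s ` {a<..b}"
  proof
    fix y assume y: "y \<in> {s a<..s b}"
    obtain x where x: "a \<le> x" "x \<le> b" "s x = y"
      using IVT'[of s a y b] y ab cont by (auto intro!: continuous_at_imp_continuous_on)
    then have "x \<noteq> a" using y by auto
    then show "y \<in> s ` {a<..b}" using x by auto
  qed
qed

lemma measure_image_eq_measure_indicator_derivative: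
  fixes s :: "real \<Rightarrow> real" and G S :: "real set"
  assumes S: "S \<in> sets lebesgue" and GS: "G \<inter> S \<in> lmeasurable" and inj: "inj_on s S"
    and der: "\<And>x. x \<in> S \<Longrightarrow> (s has_real_derivative indicator G x) (at x)"
  shows "s ` S \<in> lmeasurable" "measure lebesgue (s ` S) = measure lebesgue (G \<inter> S)"
proof -
  have der_within: "(s has_real_derivative indicator G x) (at x within S)" if "x \<in> S" for x
    using der[OF that] by (rule has_field_derivative_at_within)
  have "(\<lambda>x. \<bar>indicator G x\<bar> *\<^sub>R (\<lambda>_. 1::real) (s x)) absolutely_integrable_on S \<and>
      integral S (\<lambda>x. \<bar>indicator G x\<bar> *\<^sub>R (\<lambda>_. 1::real) (s x)) = measure lebesgue (G \<inter> S)"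
  proof -
    have "(\<lambda>x. \<bar>indicator G x\<bar> *\<^sub>R (\<lambda>_. 1::real) (s x)) = indicat_real G"
      by (auto simp: indicator_def)
    moreover have "indicat_real G absolutely_integrable_on S"
      using GS by (subst absolutely_integrable_on_iff_nonneg) (auto simp: integrable_on_indicator)
    moreover have "integral S (indicat_real G) = measure lebesgue (G \<inter> S)"
      using GS by (rule integral_indicator)
    ultimately show ?thesis by simp
  qed
  then have "(\<lambda>_. 1::real) absolutely_integrable_on s ` S \<and>
      integral (s ` S) (\<lambda>_. 1::real) = measure lebesgue (G \<inter> S)"
    using has_absolute_integral_change_of_variables_real[OF S der_within inj, of "\<lambda>_. 1"] by blast
  then show "s ` S \<in> lmeasurable" and "measure lebesgue (s ` S) = measure lebesgue (G \<inter> S)"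
    by (simp_all add: lmeasurable_iff_integrable_on absolutely_integrable_on_def lmeasure_integral)
qed

text \<open>Off a null set \<open>s\<close> has derivative \<open>indicator G\<close>; the change of variables formula handles
  the rest, and property (N) shows that the image of the null set does not matter.\<close>
lemma increment_eq_measure_unit_derivative_set:
  fixes s :: "real \<Rightarrow> real"
  assumes ac: "abs_cont s" and sm: "strict_mono s"
    and s_deriv: "AE x in lebesgue. (s has_real_derivative 0) (at x) \<or> (s has_real_derivative 1) (at x)"
    and G_def: "G = {x. (s has_real_derivative 1) (at x)}"
    and G_sets: "G \<in> sets lebesgue" and ab: "a \<le> b"
  shows "s b - s a = measure lebesgue (G \<inter> {a<..b})"
proof -
  obtain N where N: "N \<in> null_sets lebesgue"
    and N_compl: "\<And>x. x \<notin> N \<Longrightarrow> (s has_real_derivative 0) (at x) \<or> (s has_real_derivative 1) (at x)"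
    using AE_E3[OF s_deriv] by auto
  define S where "S = {a<..b} - N"
  have S_sets: "S \<in> sets lebesgue" using N by (auto simp: S_def)
  have GS: "G \<inter> S \<in> lmeasurable"
    by (rule fmeasurableI2[of "{a..b}"]) (use G_sets S_sets in \<open>auto simp: S_def\<close>)
  have der: "(s has_real_derivative indicator G x) (at x)" if "x \<in> S" for x
    using N_compl[of x] that by (auto simp: S_def G_def indicator_def)
  note image = measure_image_eq_measure_indicator_derivative[OF S_sets GS strict_mono_imp_inj_on[OF sm] der]
  have neg_image: "negligible (s ` N)"
    using negligible_image_abs_cont_mono[OF ac strict_mono_mono[OF sm]] N
    by (simp add: negligible_iff_null_sets)
  have "s b - s a = measure lebesgue {s a<..s b}"
    using sm ab by (simp add: strict_mono_less_eq)
  also have "\<dots> = measure lebesgue (s ` S)"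
  proof (rule measure_negligible_symdiff[OF image(1)])
    have "s ` {a<..b} = {s a<..s b}"
      by (rule strict_mono_continuous_image_Ioc[OF sm abs_cont_imp_isCont[OF ac] ab])
    then show "negligible (s ` S - {s a<..s b} \<union> ({s a<..s b} - s ` S))"
      by (intro negligible_subset[OF neg_image]) (auto simp: S_def)
  qed
  also have "\<dots> = measure lebesgue (G \<inter> S)" by (rule image(2))
  also have "\<dots> = measure lebesgue (G \<inter> {a<..b})"
    by (rule sym, rule measure_negligible_symdiff[OF GS], rule negligible_subset[of N])
       (use N in \<open>auto simp: S_def negligible_iff_null_sets\<close>)
  finally show ?thesis .
qed

lemma Int_stable_Ioc: "Int_stable (range (\<lambda>(a, b). {a<..b::real}))"
proof (rule Int_stableI)
  fix X Y assume "X \<in> range (\<lambda>(a, b). {a<..b::real})" "Y \<in> range (\<lambda>(a, b). {a<..b::real})"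
  then obtain a b c d where "X = {a<..b}" "Y = {c<..d}" by auto
  then have "X \<inter> Y = {max a c<..min b d}" by auto
  then show "X \<inter> Y \<in> range (\<lambda>(a, b). {a<..b::real})" by auto
qed

lemma interval_measure_eq_density_indicator:
  fixes s :: "real \<Rightarrow> real" and G :: "real set"
  assumes mono: "mono s" and cont: "\<And>x. isCont s x" and G_sets: "G \<in> sets borel"
    and incr: "\<And>a b. a \<le> b \<Longrightarrow> s b - s a = measure lebesgue (G \<inter> {a<..b})"
  shows "interval_measure s = density lborel (indicator G)"
proof -
  have Ioc: "emeasure (interval_measure s) {a<..b} = ennreal (s b - s a)" if "a \<le> b" for a b
    using mono cont that
    by (intro emeasure_interval_measure_Ioc) (auto simp: mono_def intro: continuous_at_imp_continuous_at_within)
  have Ioc_eq: "emeasure (interval_measure s) {a<..b} = emeasure (density lborel (indicator G)) {a<..b}"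
    for a b :: real
  proof (cases "a \<le> b")
    case ab: True
    have fin: "emeasure lborel (G \<inter> {a<..b}) \<noteq> \<infinity>"
      using emeasure_mono[of "G \<inter> {a<..b}" "{a<..b}" lborel] ab by (auto simp: top_unique)
    have "emeasure (interval_measure s) {a<..b} = ennreal (measure lebesgue (G \<inter> {a<..b}))"
      using Ioc[OF ab] incr[OF ab] by simp
    also have "\<dots> = emeasure lborel (G \<inter> {a<..b})"
      using G_sets fin by (simp add: emeasure_eq_ennreal_measure)
    also have "\<dots> = emeasure (density lborel (indicator G)) {a<..b}"
      using G_sets by (simp add: emeasure_density indicator_inter_arith[symmetric] Int_commute)
    finally show ?thesis .
  qed simp
  show ?thesis
  proof (rule measure_eqI_generator_eq[where \<Omega>=UNIV and E="range (\<lambda>(a, b). {a<..b::real})"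
        and A="\<lambda>i. {- real i<..real i}"])
    show "Int_stable (range (\<lambda>(a, b). {a<..b::real}))" by (rule Int_stable_Ioc)
    show "(\<Union>i. {- real i<..real i}) = UNIV"
    proof auto
      fix x :: real
      obtain n where "\<bar>x\<bar> < real n" using reals_Archimedean2 by blast
      then show "\<exists>n. - real n < x \<and> x \<le> real n" by (intro exI[of _ n]) (simp add: abs_less_iff)
    qed
    show "emeasure (interval_measure s) X = emeasure (density lborel (indicator G)) X"
      if "X \<in> range (\<lambda>(a, b). {a<..b::real})" for X
      using that Ioc_eq by auto
  qed (auto simp: Ioc borel_sigma_sets_Ioc sets_measure_of)
qed

lemma interval_measure_eq_density_unit_derivative_set:
  fixes s :: "real \<Rightarrow> real"
  assumes ac: "abs_cont s" and sm: "strict_mono s"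
    and s_deriv: "AE x in lebesgue. (s has_real_derivative 0) (at x) \<or> (s has_real_derivative 1) (at x)"
    and G_def: "G = {x. (s has_real_derivative 1) (at x)}" and G_sets: "G \<in> sets borel"
  shows "interval_measure s = density lborel (indicator G)"
  using increment_eq_measure_unit_derivative_set[OF ac sm s_deriv G_def]
    abs_cont_imp_isCont[OF ac] strict_mono_mono[OF sm] G_sets
  by (intro interval_measure_eq_density_indicator) auto

lemma DERIV_zero_if_ball_measure_small:
  fixes w :: "real \<Rightarrow> real" and M :: "real measure"
  assumes sM: "sets M = sets borel"
    and incr_le: "\<And>x y. x \<le> y \<Longrightarrow> ennreal \<bar>w y - w x\<bar> \<le> emeasure M {x<..y}"
    and small: "\<And>t. t > 0 \<Longrightarrow> \<exists>d>0. \<forall>h. 0 < h \<and> h < d \<longrightarrow> emeasure M (ball x h) \<le> ennreal (2 * t * h)"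
  shows "(w has_real_derivative 0) (at x)"
  unfolding DERIV_def
proof (rule LIM_I)
  fix r :: real
  assume r: "r > 0"
  define t where "t = r / 8"
  have t: "t > 0" using r by (simp add: t_def)
  obtain d where d: "d > 0"
    and D: "\<And>h. 0 < h \<Longrightarrow> h < d \<Longrightarrow> emeasure M (ball x h) \<le> ennreal (2 * t * h)"
    using small[OF t] by auto
  have key: "\<bar>w q - w p\<bar> \<le> 4 * t * (q - p)" if pq: "p < q" "x \<in> {p..q}" "q - p < d / 2" for p q
  proof -
    have "ennreal \<bar>w q - w p\<bar> \<le> emeasure M {p<..q}" using pq by (intro incr_le) simp
    also have "\<dots> \<le> emeasure M (ball x (2 * (q - p)))"
      using pq sM by (intro emeasure_mono) (auto simp: dist_real_def)
    also have "\<dots> \<le> ennreal (2 * t * (2 * (q - p)))" using pq by (intro D) auto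
    finally show ?thesis using t pq by (simp add: ennreal_le_iff algebra_simps)
  qed
  show "\<exists>e>0. \<forall>h. h \<noteq> 0 \<and> norm (h - 0) < e \<longrightarrow> norm ((w (x + h) - w x) / h - 0) < r"
  proof (intro exI[of _ "d / 2"] conjI allI impI)
    fix h :: real
    assume h: "h \<noteq> 0 \<and> norm (h - 0) < d / 2"
    have "\<bar>w (x + h) - w x\<bar> \<le> 4 * t * \<bar>h\<bar>"
      using key[of x "x + h"] key[of "x + h" x] h by (cases "h > 0") (auto simp: abs_minus_commute)
    also have "\<dots> < r * \<bar>h\<bar>" using r h by (simp add: t_def)
    finally show "norm ((w (x + h) - w x) / h - 0) < r"
      using h by (simp add: abs_divide divide_less_eq)
  qed (use d in simp)
qed

lemma cmult_emeasure_lborel_UN_le: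
  fixes B :: "'i \<Rightarrow> real set" and M :: "real measure"
  assumes sM: "sets M = sets borel" and C: "countable C" and disj: "disjoint_family_on B C"
    and B_sets: "\<And>i. B i \<in> sets borel"
    and le: "\<And>i. i \<in> C \<Longrightarrow> ennreal t * emeasure lborel (B i) \<le> emeasure M (B i)"
  shows "ennreal t * emeasure lborel (\<Union>i\<in>C. B i) \<le> emeasure M (\<Union>i\<in>C. B i)"
proof -
  have "ennreal t * emeasure lborel (\<Union>i\<in>C. B i) = (\<integral>\<^sup>+i. ennreal t * emeasure lborel (B i) \<partial>count_space C)"
    using C disj B_sets by (simp add: emeasure_UN_countable nn_integral_cmult)
  also have "\<dots> \<le> (\<integral>\<^sup>+i. emeasure M (B i) \<partial>count_space C)"
    by (rule nn_integral_mono) (use le in simp)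
  also have "\<dots> = emeasure M (\<Union>i\<in>C. B i)"
    using C disj B_sets sM by (intro emeasure_UN_countable[symmetric]) auto
  finally show ?thesis .
qed

lemma outer_measure_le_if_negligible_diff:
  assumes "measure lebesgue Y \<le> e" and "negligible (A - Y)" and Y: "Y \<in> lmeasurable"
  shows "\<exists>T. A \<subseteq> T \<and> T \<in> lmeasurable \<and> measure lebesgue T \<le> e"
proof (intro exI conjI)
  show "A \<subseteq> (A - Y) \<union> Y" by blast
  show "(A - Y) \<union> Y \<in> lmeasurable"
    using negligible_imp_measurable[OF assms(2)] Y by (rule fmeasurable.Un)
  have "measure lebesgue ((A - Y) \<union> Y) \<le> measure lebesgue (A - Y) + measure lebesgue Y"
    by (rule measure_Un_le) (use negligible_imp_sets[OF assms(2)] Y in auto)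
  then show "measure lebesgue ((A - Y) \<union> Y) \<le> e"
    using assms negligible_imp_measure0 by fastforce
qed

text \<open>\<open>2 * h\<close> is the length of \<open>ball x h\<close>; a Vitali cover of \<open>A\<close> by such balls inside \<open>U\<close>
  bounds the outer measure of \<open>A\<close> by \<open>M U / t\<close>.\<close>
lemma vitali_cover_measure_le:
  fixes M :: "real measure" and A U :: "real set" and t e :: real
  assumes sM: "sets M = sets borel" and t: "t > 0"
    and AU: "A \<subseteq> U" and oU: "open U" and bU: "bounded U"
    and MU: "emeasure M U < ennreal (e * t)"
    and large: "\<And>x d. x \<in> A \<Longrightarrow> d > 0 \<Longrightarrow> \<exists>h. 0 < h \<and> h < d \<and> ennreal (2 * t * h) < emeasure M (ball x h)"
  shows "\<exists>T. A \<subseteq> T \<and> T \<in> lmeasurable \<and> measure lebesgue T \<le> e"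
proof -
  define K where "K = {(y, h). y \<in> A \<and> 0 < h \<and> ball y h \<subseteq> U \<and> ennreal (2 * t * h) < emeasure M (ball y h)}"
  have cover: "\<exists>i. i \<in> K \<and> x \<in> ball (fst i) (snd i) \<and> snd i < d" if x: "x \<in> A" and d: "0 < d" for x d
  proof -
    obtain r where r: "r > 0" "ball x r \<subseteq> U" using x AU oU open_contains_ball by blast
    obtain h where h: "0 < h" "h < min d r" "ennreal (2 * t * h) < emeasure M (ball x h)"
      using large[OF x, of "min d r"] d r by auto
    have "ball x h \<subseteq> U" using h r by (meson min.strict_boundedE order.trans subset_ball less_imp_le)
    then show ?thesis using x h by (intro exI[of _ "(x, h)"]) (auto simp: K_def)
  qed
  obtain C where C: "countable C" "C \<subseteq> K"
    and pw: "pairwise (\<lambda>i j. disjnt (ball (fst i) (snd i)) (ball (fst j) (snd j))) C"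
    and neg: "negligible (A - (\<Union>i\<in>C. ball (fst i) (snd i)))"
    by (rule Vitali_covering_theorem_balls[of A K fst snd, OF cover])
  define B where "B i = ball (fst i) (snd i)" for i :: "real \<times> real"
  define Y where "Y = (\<Union>i\<in>C. B i)"
  have YU: "Y \<subseteq> U" using C by (fastforce simp: Y_def B_def K_def)
  have oY: "open Y" by (auto simp: Y_def B_def)
  have Y_meas: "Y \<in> lmeasurable" using oY YU bU bounded_subset lmeasurable_open by blast
  have "ennreal t * emeasure lborel (B i) \<le> emeasure M (B i)" if "i \<in> C" for i
  proof -
    obtain y h where i: "i = (y, h)" by (cases i)
    have h: "0 < h" "ennreal (2 * t * h) < emeasure M (ball y h)" using that C i by (auto simp: K_def)
    then have "ennreal t * emeasure lborel (B i) = ennreal (2 * t * h)"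
      using t by (simp add: B_def i ball_eq_greaterThanLessThan ennreal_mult[symmetric] algebra_simps)
    then show ?thesis using h by (simp add: B_def i)
  qed
  then have "ennreal t * emeasure lborel Y \<le> emeasure M Y"
    unfolding Y_def using C pw
    by (intro cmult_emeasure_lborel_UN_le[OF sM])
       (auto simp: disjoint_family_on_def pairwise_def disjnt_def B_def)
  also have "\<dots> \<le> emeasure M U" by (rule emeasure_mono[OF YU]) (use sM oU in auto)
  also have "\<dots> < ennreal (e * t)" by (rule MU)
  finally have lt: "ennreal t * emeasure lborel Y < ennreal (e * t)" .
  have "emeasure lborel Y = emeasure lebesgue Y" using oY by (simp add: borel_open)
  then have "emeasure lborel Y = ennreal (measure lebesgue Y)"
    by (simp add: emeasure_eq_measure2[OF Y_meas])
  then have "ennreal (t * measure lebesgue Y) < ennreal (e * t)"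
    using lt t by (simp add: ennreal_mult)
  then have "measure lebesgue Y \<le> e"
    using t by (subst (asm) ennreal_less_iff) (auto simp: mult.commute)
  moreover have "negligible (A - Y)" using neg by (simp add: Y_def B_def)
  ultimately show ?thesis using Y_meas by (rule outer_measure_le_if_negligible_diff)
qed

lemma negligible_ball_measure_large:
  fixes M :: "real measure" and F W :: "real set"
  assumes sM: "sets M = sets borel" and t: "t > 0"
    and F_sets: "F \<in> sets borel" and MF: "emeasure M F = 0"
    and oW: "open W" and bW: "bounded W" and MW: "emeasure M W < \<infinity>"
  shows "negligible {x \<in> F \<inter> W. \<forall>d>0. \<exists>h. 0 < h \<and> h < d \<and> ennreal (2 * t * h) < emeasure M (ball x h)}"
    (is "negligible ?A")
  unfolding negligible_outer_le
proof (intro allI impI)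
  fix e :: real
  assume e: "e > 0"
  define M' where "M' = density M (indicator W)"
  have W_sets: "W \<in> sets borel" using oW by simp
  have sM': "sets M' = sets borel" using sM by (simp add: M'_def)
  have M'_eq: "emeasure M' X = emeasure M (W \<inter> X)" if "X \<in> sets borel" for X
    using that W_sets sM
    by (simp add: M'_def emeasure_density indicator_inter_arith[symmetric] Int_commute)
  have "space M' = UNIV" using sM' sets_eq_imp_space_eq by fastforce
  then have M'_fin: "emeasure M' (space M') \<noteq> \<infinity>" using M'_eq[of UNIV] MW by simp
  have "emeasure M (W \<inter> (F \<inter> W)) \<le> emeasure M F"
    using F_sets sM by (intro emeasure_mono) auto
  then have "emeasure M' (F \<inter> W) = 0" using M'_eq[of "F \<inter> W"] F_sets W_sets MF by simp
  then have "(INF U \<in> {U. F \<inter> W \<subseteq> U \<and> open U}. emeasure M' U) < ennreal (e * t)"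
    using outer_regular[OF sM' M'_fin, of "F \<inter> W"] F_sets W_sets e t by simp
  then obtain U where U: "F \<inter> W \<subseteq> U" "open U" "emeasure M' U < ennreal (e * t)"
    unfolding INF_less_iff by blast
  show "\<exists>T. ?A \<subseteq> T \<and> T \<in> lmeasurable \<and> measure lebesgue T \<le> e"
  proof (rule vitali_cover_measure_le[OF sM t])
    show "?A \<subseteq> U \<inter> W" using U by auto
    show "open (U \<inter> W)" using U oW by auto
    show "bounded (U \<inter> W)" using bW by (meson Int_lower2 bounded_subset)
    show "emeasure M (U \<inter> W) < ennreal (e * t)"
      using M'_eq[of U] U by (simp add: borel_open Int_commute)
  qed auto
qed

text \<open>The points of \<open>A n k\<close>, where \<open>M\<close> has upper density above \<open>1 / Suc k\<close>, form a null set by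
  the Vitali argument; at the remaining points of \<open>F\<close> the upper density of \<open>M\<close> vanishes.\<close>
lemma AE_DERIV_zero_on_null_set:
  fixes w :: "real \<Rightarrow> real" and M :: "real measure" and F :: "real set"
  assumes sM: "sets M = sets borel" and F_sets: "F \<in> sets borel" and MF: "emeasure M F = 0"
    and fin: "\<And>a b. emeasure M {a<..b} < \<infinity>"
    and incr_le: "\<And>x y. x \<le> y \<Longrightarrow> ennreal \<bar>w y - w x\<bar> \<le> emeasure M {x<..y}"
  shows "AE x in lebesgue. x \<in> F \<longrightarrow> (w has_real_derivative 0) (at x)"
proof -
  define A where "A n k = {x \<in> F \<inter> {- real n<..<real n}. \<forall>d>0. \<exists>h. 0 < h \<and> h < d \<and>
      ennreal (2 * inverse (real (Suc k)) * h) < emeasure M (ball x h)}" for n k :: nat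
  have "negligible (A n k)" for n k
    unfolding A_def
  proof (rule negligible_ball_measure_large[OF sM _ F_sets MF])
    have "emeasure M {- real n<..<real n} \<le> emeasure M {- real n<..real n}"
      by (rule emeasure_mono) (auto simp: sM)
    then show "emeasure M {- real n<..<real n} < \<infinity>" using fin by (meson order.strict_trans1)
  qed auto
  then have "negligible (\<Union>n. \<Union>k. A n k)"
    by (auto intro!: negligible_countable_Union)
  moreover have "(w has_real_derivative 0) (at x)" if x: "x \<in> F" "x \<notin> (\<Union>n. \<Union>k. A n k)" for x
  proof (rule DERIV_zero_if_ball_measure_small[OF sM incr_le])
    fix t :: real
    assume "t > 0"
    then obtain k where k: "inverse (real (Suc k)) < t" using reals_Archimedean by blast
    obtain n :: nat where "\<bar>x\<bar> < real n" using reals_Archimedean2 by blast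
    then have "x \<notin> A n k" "x \<in> F \<inter> {- real n<..<real n}" using x by (auto simp: abs_less_iff)
    then obtain d where d: "d > 0"
      and small: "\<And>h. 0 < h \<Longrightarrow> h < d \<Longrightarrow> emeasure M (ball x h) \<le> ennreal (2 * inverse (real (Suc k)) * h)"
      unfolding A_def by (auto simp: not_less) (meson not_le)
    have "emeasure M (ball x h) \<le> ennreal (2 * t * h)" if "0 < h" "h < d" for h
      using small[OF that] k that by (meson order.trans ennreal_leI mult_right_mono mult_left_mono less_imp_le zero_le_numeral)
    then show "\<exists>d>0. \<forall>h. 0 < h \<and> h < d \<longrightarrow> emeasure M (ball x h) \<le> ennreal (2 * t * h)"
      using d by blast
  qed
  ultimately show ?thesis
    by (intro AE_I'[of "\<Union>n. \<Union>k. A n k"]) (auto simp: negligible_iff_null_sets, blast)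
qed

lemma emeasure_density_abs_eq_nn_integral:
  fixes f :: "'a \<Rightarrow> real"
  assumes "f \<in> borel_measurable M" and "X \<in> sets M"
  shows "emeasure (density M (\<lambda>x. ennreal \<bar>f x\<bar>)) X = (\<integral>\<^sup>+x. ennreal (norm (indicator X x *\<^sub>R f x)) \<partial>M)"
  using assms by (simp add: emeasure_density) (intro nn_integral_cong, simp add: indicator_def)

lemma ds_density_increment_le:
  assumes u: "ds_density s u f" and xy: "x \<le> y"
  shows "ennreal \<bar>u y - u x\<bar> \<le> emeasure (density (interval_measure s) (\<lambda>z. ennreal \<bar>f z\<bar>)) {x<..y}"
proof -
  have f: "f \<in> borel_measurable (interval_measure s)" and int: "set_integrable (interval_measure s) {x<..y} f"
    and eq: "u y - u x = (LINT z:{x<..y}|interval_measure s. f z)"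
    using u xy by (auto simp: ds_density_def measurable_cong_sets[OF sets_interval_measure refl])
  have "ennreal \<bar>u y - u x\<bar> = ennreal (norm (LINT z|interval_measure s. indicator {x<..y} z *\<^sub>R f z))"
    using eq by (simp add: set_lebesgue_integral_def)
  also have "\<dots> \<le> (\<integral>\<^sup>+z. ennreal (norm (indicator {x<..y} z *\<^sub>R f z)) \<partial>interval_measure s)"
    using int unfolding set_integrable_def by (rule integral_norm_bound_ennreal)
  also have "\<dots> = emeasure (density (interval_measure s) (\<lambda>z. ennreal \<bar>f z\<bar>)) {x<..y}"
    using f by (simp add: emeasure_density_abs_eq_nn_integral)
  finally show ?thesis .
qed

lemma ds_density_emeasure_Ioc_finite:
  assumes u: "ds_density s u f"
  shows "emeasure (density (interval_measure s) (\<lambda>z. ennreal \<bar>f z\<bar>)) {a<..b} < \<infinity>"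
proof (cases "a \<le> b")
  case True
  then have f: "f \<in> borel_measurable (interval_measure s)"
    and int: "integrable (interval_measure s) (\<lambda>z. indicator {a<..b} z *\<^sub>R f z)"
    using u by (auto simp: ds_density_def set_integrable_def measurable_cong_sets[OF sets_interval_measure refl])
  then show ?thesis
    by (simp add: emeasure_density_abs_eq_nn_integral integrable_iff_bounded)
qed simp

lemma emeasure_density_density_indicator_Compl:
  fixes g :: "real \<Rightarrow> ennreal"
  assumes "G \<in> sets borel" and "g \<in> borel_measurable borel"
  shows "emeasure (density (density lborel (indicator G)) g) (- G) = 0"
proof -
  have "emeasure (density (density lborel (indicator G)) g) (- G) =
      emeasure (density lborel (\<lambda>x. indicator G x * g x)) (- G)"
    using assms by (simp add: density_density_eq)
  also have "\<dots> = (\<integral>\<^sup>+x. indicator G x * g x * indicator (- G) x \<partial>lborel)"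
    using assms by (intro emeasure_density) auto
  also have "\<dots> = 0"
  proof -
    have "(\<lambda>x. indicator G x * g x * indicator (- G) x) = (\<lambda>_. 0 :: ennreal)"
      by (rule ext) (simp add: indicator_def)
    then show ?thesis by (simp only:) simp
  qed
  finally show ?thesis .
qed

lemma ds_density_AE_DERIV_zero:
  fixes s u f :: "real \<Rightarrow> real"
  assumes ac: "abs_cont s" and sm: "strict_mono s"
    and s_deriv: "AE x in lebesgue. (s has_real_derivative 0) (at x) \<or> (s has_real_derivative 1) (at x)"
    and G_def: "G = {x. (s has_real_derivative 1) (at x)}" and G_open: "open G"
    and u: "ds_density s u f"
  shows "AE x in lebesgue. x \<notin> G \<longrightarrow> (u has_real_derivative 0) (at x)"
proof -
  define M where "M = density (interval_measure s) (\<lambda>z. ennreal \<bar>f z\<bar>)"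
  have G_sets: "G \<in> sets borel" using G_open by simp
  have f: "f \<in> borel_measurable borel" using u by (simp add: ds_density_def)
  have "interval_measure s = density lborel (indicator G)"
    by (rule interval_measure_eq_density_unit_derivative_set[OF ac sm s_deriv G_def G_sets])
  then have "emeasure M (- G) = 0"
    unfolding M_def by (simp only:, intro emeasure_density_density_indicator_Compl G_sets) (use f in measurable)
  then have "AE x in lebesgue. x \<in> - G \<longrightarrow> (u has_real_derivative 0) (at x)"
    using G_sets ds_density_emeasure_Ioc_finite[OF u] ds_density_increment_le[OF u]
    by (intro AE_DERIV_zero_on_null_set[of M]) (auto simp: M_def)
  then show ?thesis by simp
qed

lemma deriv_add_DERIV_zero:
  assumes "(v has_real_derivative 0) (at x)"
  shows "deriv (\<lambda>y. v y + w y) x = deriv w x"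
proof -
  have "((\<lambda>y. v y + w y) has_real_derivative D) (at x) \<longleftrightarrow> (w has_real_derivative D) (at x)" for D
  proof
    assume "((\<lambda>y. v y + w y) has_real_derivative D) (at x)"
    from DERIV_diff[OF this assms] show "(w has_real_derivative D) (at x)" by simp
  next
    assume "(w has_real_derivative D) (at x)"
    from DERIV_add[OF assms this] show "((\<lambda>y. v y + w y) has_real_derivative D) (at x)" by simp
  qed
  then show ?thesis by (simp add: deriv_def)
qed

theorem mainTheorem9:
  fixes s u u1 u2 :: "real \<Rightarrow> real" and G F :: "real set"
  assumes s_mono: "strict_mono s"
    and s_ac: "abs_cont s"
    and s_deriv: "AE x in lebesgue. (s has_real_derivative 0) (at x) \<or> (s has_real_derivative 1) (at x)"
    and G_def: "G = {x. (s has_real_derivative 1) (at x)}"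
    and F_def: "F = - G"
    and G_open: "open G"
    and F_pos: "emeasure lebesgue F > 0"
    and F_perfect: "\<forall>x\<in>F. x islimpt F"
    and u: "u \<in> Fe"
    and u1: "u1 \<in> Fse s"
    and u2: "u2 \<in> Gs s"
    and decomp: "u = (\<lambda>x. u1 x + u2 x)"
  shows "AE x in lebesgue. x \<in> F \<longrightarrow> deriv u x = deriv u2 x"
proof -
  obtain f where "ds_density s u1 f"
    using u1 by (auto simp: Fse_def)
  then have "AE x in lebesgue. x \<notin> G \<longrightarrow> (u1 has_real_derivative 0) (at x)"
    by (rule ds_density_AE_DERIV_zero[OF s_ac s_mono s_deriv G_def G_open])
  then show ?thesis
    by eventually_elim (auto simp: F_def decomp deriv_add_DERIV_zero)
qed

end
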